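(* Let $(\mathcal{X},d)$ be a finite metric space $\mathcal{X}=\{x_0,\dots,x_n\}$ ($n\ge1$, pairwise distinct points), let $(\mathcal{Y},\|\cdot\|)$ be a non-trivial, strictly convex real Banach space, let $y\in\operatorname{Lip}^1_0$ and let $v\in\mathcal{Y}$ with $\|v\|=1$. Define $D=\{t=(t_0,\dots,t_n)\in\mathbb{R}^{n+1} : (y_0+t_0v,\dots,y_n+t_nv)\in\operatorname{Lip}^1_0\}$. Then $D$ is a nonempty, convex, compact subset of $\{0\}\times\mathbb{R}^n$, and for every extreme point $t\in\operatorname{ext}(D)$ the point $(y_0+t_0v,\dots,y_n+t_nv)$ is an extreme point of $\operatorname{Lip}^1_0$.
   Context: $\operatorname{Lip}^1_0$ denotes the set of all $y=(y_0,\dots,y_n)\in\mathcal{Y}^{n+1}$ with $y_0=0$ and $\|y_i-y_j\|\le d(x_i,x_j)$ for all $i,j\in\{0,1,\dots,n\}$. $\operatorname{ext}(C)$ denotes the set of extreme points of a convex set $C$. *)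

theory Defs
  imports "HOL-Analysis.Analysis"
begin

text \<open>Tuples (z_0,...,z_n) in V^(n+1) are represented as functions nat => V
  that vanish outside {0..n}.\<close>

definition strictly_convex_space :: "'b::real_normed_vector itself \<Rightarrow> bool" where
  "strictly_convex_space _ \<longleftrightarrow>
     (\<forall>u v::'b. norm u = 1 \<longrightarrow> norm v = 1 \<longrightarrow> u \<noteq> v \<longrightarrow> norm ((1/2) *\<^sub>R (u + v)) < 1)"

definition Lip10 :: "(nat \<Rightarrow> 'a::metric_space) \<Rightarrow> nat \<Rightarrow> (nat \<Rightarrow> 'b::real_normed_vector) set" where
  "Lip10 x n = {y. y 0 = 0 \<and> (\<forall>i>n. y i = 0) \<and>
      (\<forall>i\<le>n. \<forall>j\<le>n. norm (y i - y j) \<le> dist (x i) (x j))}"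

definition tuple_convex :: "(nat \<Rightarrow> 'b::real_vector) set \<Rightarrow> bool" where
  "tuple_convex S \<longleftrightarrow> (\<forall>a\<in>S. \<forall>b\<in>S. \<forall>u::real. 0 \<le> u \<longrightarrow> u \<le> 1 \<longrightarrow>
      (\<lambda>i. (1 - u) *\<^sub>R a i + u *\<^sub>R b i) \<in> S)"

definition tuple_extreme_point :: "(nat \<Rightarrow> 'b::real_vector) \<Rightarrow> (nat \<Rightarrow> 'b) set \<Rightarrow> bool" where
  "tuple_extreme_point z S \<longleftrightarrow> z \<in> S \<and>
     (\<forall>a\<in>S. \<forall>b\<in>S. \<forall>u::real. 0 < u \<longrightarrow> u < 1 \<longrightarrow>
        z = (\<lambda>i. (1 - u) *\<^sub>R a i + u *\<^sub>R b i) \<longrightarrow> a = b)"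

end

theory Submission
  imports Defs
begin

text \<open>Call a pair \<open>(i, j)\<close> tight for \<open>z \<in> Lip10 x n\<close> if \<open>\<parallel>z i - z j\<parallel> = d(x i, x j)\<close>.
  If \<open>z = (1 - u) a + u b\<close> with \<open>a, b \<in> Lip10 x n\<close>, strict convexity forces
  \<open>a i - a j = b i - b j = z i - z j\<close> on every tight pair, so \<open>a = b = z\<close> as soon as every index
  is joined to \<open>0\<close> by a chain of tight pairs. For \<open>t\<close> extreme in \<open>D\<close> this is the case: otherwise
  the indices not reached from \<open>0\<close> have slack to all others, and shifting them by \<open>\<pm>e v\<close> writes
  \<open>t\<close> as a midpoint of two points of \<open>D\<close>. Convexity and compactness of \<open>D\<close> are routine, as \<open>D\<close>
  is the preimage of the closed convex set \<open>Lip10 x n\<close> under an affine map and its coordinates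
  are bounded by \<open>|t i| \<le> 2 d(x i, x 0)\<close>.\<close>

lemma strictly_convex_unit_combination_eq:
  fixes p q :: "'b::real_normed_vector"
  assumes sc: "strictly_convex_space TYPE('b)"
    and p: "norm p \<le> 1" and q: "norm q \<le> 1" and u: "0 < u" "u \<le> 1/2"
    and comb: "norm ((1 - u) *\<^sub>R p + u *\<^sub>R q) = 1"
  shows "p = q"
proof (rule ccontr)
  assume "p \<noteq> q"
  have "1 \<le> (1 - u) * norm p + u * norm q"
    using comb norm_triangle_ineq[of "(1 - u) *\<^sub>R p" "u *\<^sub>R q"] u by simp
  then have "(1 - u) * (1 - norm p) + u * (1 - norm q) \<le> 0"
    by (simp add: algebra_simps)
  moreover have "0 \<le> (1 - u) * (1 - norm p)" "0 \<le> u * (1 - norm q)"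
    using p q u by simp_all
  ultimately have "(1 - u) * (1 - norm p) = 0" "u * (1 - norm q) = 0"
    by linarith+
  then have unit: "norm p = 1" "norm q = 1"
    using u by simp_all
  then have mid: "norm ((1/2) *\<^sub>R (p + q)) < 1"
    using sc \<open>p \<noteq> q\<close> unfolding strictly_convex_space_def by blast
  \<comment> \<open>for \<open>u \<le> 1/2\<close> the combination lies on the segment from \<open>p\<close> to the midpoint\<close>
  have "(1 - u) *\<^sub>R p + u *\<^sub>R q = (1 - 2 * u) *\<^sub>R p + (2 * u) *\<^sub>R ((1/2) *\<^sub>R (p + q))"
    by (simp add: algebra_simps flip: scaleR_add_left)
  then have "1 \<le> (1 - 2 * u) * norm p + (2 * u) * norm ((1/2) *\<^sub>R (p + q))"
    using comb norm_triangle_ineq[of "(1 - 2 * u) *\<^sub>R p" "(2 * u) *\<^sub>R ((1/2) *\<^sub>R (p + q))"] u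
    by simp
  also have "\<dots> < 1"
    using mid unit u by simp
  finally show False by simp
qed

lemma strictly_convex_combination_eq:
  fixes p q :: "'b::real_normed_vector"
  assumes sc: "strictly_convex_space TYPE('b)"
    and p: "norm p \<le> r" and q: "norm q \<le> r" and u: "0 < u" "u < 1"
    and comb: "norm ((1 - u) *\<^sub>R p + u *\<^sub>R q) = r"
  shows "p = q"
proof (cases "r > 0")
  case False
  then have "norm p \<le> 0" "norm q \<le> 0"
    using p q False by linarith+
  then show ?thesis by simp
next
  case True
  let ?p = "p /\<^sub>R r" and ?q = "q /\<^sub>R r"
  have unit: "norm ?p \<le> 1" "norm ?q \<le> 1"
    using p q True by (simp_all add: field_simps)
  have "(1 - u) *\<^sub>R ?p + u *\<^sub>R ?q = ((1 - u) *\<^sub>R p + u *\<^sub>R q) /\<^sub>R r"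
    by (simp add: scaleR_add_right mult.commute)
  then have comb_unit: "norm ((1 - u) *\<^sub>R ?p + u *\<^sub>R ?q) = 1"
    using comb True by simp
  have "?p = ?q"
  proof (cases "u \<le> 1/2")
    case True
    then show ?thesis
      using strictly_convex_unit_combination_eq[OF sc unit _ _ comb_unit] u by blast
  next
    case False
    then show ?thesis
      using strictly_convex_unit_combination_eq[OF sc unit(2,1), of "1 - u"] comb_unit u
      by (auto simp: add.commute)
  qed
  then show ?thesis using True by simp
qed

lemma Lip10D:
  assumes "z \<in> Lip10 x n"
  shows "z 0 = 0" "\<And>i. n < i \<Longrightarrow> z i = 0"
    "\<And>i j. i \<le> n \<Longrightarrow> j \<le> n \<Longrightarrow> norm (z i - z j) \<le> dist (x i) (x j)"
  using assms unfolding Lip10_def by auto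

lemma tuple_extreme_pointD:
  assumes "tuple_extreme_point z S" "a \<in> S" "b \<in> S" "0 < u" "u < 1"
    and "z = (\<lambda>i. (1 - u) *\<^sub>R a i + u *\<^sub>R b i)"
  shows "a = b"
  using assms unfolding tuple_extreme_point_def by blast

lemma tuple_convex_Lip10:
  fixes x :: "nat \<Rightarrow> 'a::metric_space"
  shows "tuple_convex (Lip10 x n :: (nat \<Rightarrow> 'b::real_normed_vector) set)"
  unfolding tuple_convex_def
proof (intro ballI allI impI)
  fix a b :: "nat \<Rightarrow> 'b" and u :: real
  assume a: "a \<in> Lip10 x n" and b: "b \<in> Lip10 x n" and u: "0 \<le> u" "u \<le> 1"
  have "norm ((1 - u) *\<^sub>R a i + u *\<^sub>R b i - ((1 - u) *\<^sub>R a j + u *\<^sub>R b j)) \<le> dist (x i) (x j)"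
    if "i \<le> n" "j \<le> n" for i j
  proof -
    have "(1 - u) *\<^sub>R a i + u *\<^sub>R b i - ((1 - u) *\<^sub>R a j + u *\<^sub>R b j)
        = (1 - u) *\<^sub>R (a i - a j) + u *\<^sub>R (b i - b j)"
      by (simp add: algebra_simps)
    also have "norm \<dots> \<le> (1 - u) * norm (a i - a j) + u * norm (b i - b j)"
      using norm_triangle_ineq[of "(1 - u) *\<^sub>R (a i - a j)" "u *\<^sub>R (b i - b j)"] u by simp
    also have "\<dots> \<le> (1 - u) * dist (x i) (x j) + u * dist (x i) (x j)"
      using Lip10D(3)[OF a that] Lip10D(3)[OF b that] u by (intro add_mono mult_left_mono) auto
    finally show ?thesis by (simp add: algebra_simps)
  qed
  then show "(\<lambda>i. (1 - u) *\<^sub>R a i + u *\<^sub>R b i) \<in> Lip10 x n"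
    using Lip10D(1,2)[OF a] Lip10D(1,2)[OF b] unfolding Lip10_def by auto
qed

lemma continuous_on_coordinate: "continuous_on S (\<lambda>t::nat \<Rightarrow> 'c::topological_space. t i)"
  by (rule continuous_on_product_then_coordinatewise[OF continuous_on_id])

lemma closed_Lip10: "closed (Lip10 x n :: (nat \<Rightarrow> 'b::real_normed_vector) set)"
proof -
  have "Lip10 x n = {z. z 0 = 0} \<inter> {z. \<forall>i. n < i \<longrightarrow> z i = 0} \<inter>
      {z :: nat \<Rightarrow> 'b. \<forall>i. i \<le> n \<longrightarrow> (\<forall>j. j \<le> n \<longrightarrow> norm (z i - z j) \<le> dist (x i) (x j))}"
    unfolding Lip10_def by auto
  also have "closed \<dots>"
    by (intro closed_Int closed_Collect_all closed_Collect_imp closed_Collect_eq closed_Collect_le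
        continuous_intros continuous_on_coordinate closed_Collect_const) (simp_all add: Collect_const)
  finally show ?thesis .
qed

definition tight_pairs ::
    "(nat \<Rightarrow> 'a::metric_space) \<Rightarrow> nat \<Rightarrow> (nat \<Rightarrow> 'b::real_normed_vector) \<Rightarrow> (nat \<times> nat) set" where
  "tight_pairs x n z = {(i, j). i \<le> n \<and> j \<le> n \<and> norm (z i - z j) = dist (x i) (x j)}"

lemma tight_pairs_sym: "(i, j) \<in> tight_pairs x n z \<Longrightarrow> (j, i) \<in> tight_pairs x n z"
  unfolding tight_pairs_def by (auto simp: dist_commute norm_minus_commute)

lemma Lip10_extreme_if_tight_connected:
  fixes z :: "nat \<Rightarrow> 'b::real_normed_vector"
  assumes sc: "strictly_convex_space TYPE('b)" and z: "z \<in> Lip10 x n"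
    and connected: "\<And>k. k \<le> n \<Longrightarrow> (0, k) \<in> (tight_pairs x n z)\<^sup>*"
  shows "tuple_extreme_point z (Lip10 x n)"
  unfolding tuple_extreme_point_def
proof (intro conjI ballI allI impI)
  show "z \<in> Lip10 x n"
    by (rule z)
  fix a b :: "nat \<Rightarrow> 'b" and u :: real
  assume a: "a \<in> Lip10 x n" and b: "b \<in> Lip10 x n" and u: "0 < u" "u < 1"
    and comb: "z = (\<lambda>i. (1 - u) *\<^sub>R a i + u *\<^sub>R b i)"
  have tight_step: "a j - z j = a i - z i" if "(i, j) \<in> tight_pairs x n z" for i j
  proof -
    have ij: "i \<le> n" "j \<le> n" and tight: "norm (z i - z j) = dist (x i) (x j)"
      using that unfolding tight_pairs_def by auto
    have diff: "z i - z j = (1 - u) *\<^sub>R (a i - a j) + u *\<^sub>R (b i - b j)"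
      unfolding comb by (simp add: algebra_simps)
    have "a i - a j = b i - b j"
      using strictly_convex_combination_eq[OF sc Lip10D(3)[OF a ij] Lip10D(3)[OF b ij] u]
        tight diff by simp
    then have "z i - z j = ((1 - u) + u) *\<^sub>R (a i - a j)"
      unfolding diff scaleR_add_left by simp
    then show ?thesis
      by (simp add: algebra_simps)
  qed
  have "a k = z k" for k
  proof (cases "k \<le> n")
    case True
    have "(0, k) \<in> (tight_pairs x n z)\<^sup>*"
      using connected True .
    then have "a k - z k = a 0 - z 0"
      by (induction rule: rtrancl_induct) (auto dest: tight_step)
    then show ?thesis
      using Lip10D(1)[OF a] Lip10D(1)[OF z] by simp
  next
    case False
    then show ?thesis
      using Lip10D(2)[OF a] Lip10D(2)[OF z] by simp
  qed
  then have "u *\<^sub>R b i = u *\<^sub>R a i" for i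
    using fun_cong[OF comb, of i] by (auto simp: algebra_simps)
  then show "a = b"
    using u by (simp add: fun_eq_iff)
qed

lemma Lip10_perturb_slack_block:
  fixes z :: "nat \<Rightarrow> 'b::real_normed_vector"
  assumes z: "z \<in> Lip10 x n" and v: "norm v \<le> 1" and C: "C \<subseteq> {1..n}"
    and slack: "\<And>i j. i \<in> C \<Longrightarrow> j \<le> n \<Longrightarrow> j \<notin> C \<Longrightarrow> norm (z i - z j) < dist (x i) (x j)"
  obtains e where "e > 0"
    "\<And>c. \<bar>c\<bar> \<le> e \<Longrightarrow> (\<lambda>i. z i + (if i \<in> C then c else 0) *\<^sub>R v) \<in> Lip10 x n"
proof
  define P where "P = {(i, j). i \<in> C \<and> j \<le> n \<and> j \<notin> C}"
  define gap where "gap = (\<lambda>(i, j). dist (x i) (x j) - norm (z i - z j))"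
  define e where "e = Min (insert 1 (gap ` P))"
  have "P \<subseteq> {..n} \<times> {..n}"
    using C unfolding P_def by auto
  then have "finite P"
    by (rule finite_subset) simp
  moreover have "\<forall>g \<in> gap ` P. 0 < g"
    using slack unfolding P_def gap_def by auto
  ultimately show "e > 0"
    unfolding e_def by (simp add: Min_gr_iff)
  have gap_le: "e \<le> dist (x i) (x j) - norm (z i - z j)" if "i \<in> C" "j \<le> n" "j \<notin> C" for i j
  proof -
    have "gap (i, j) \<in> insert 1 (gap ` P)"
      using that unfolding P_def by blast
    then show ?thesis
      using \<open>finite P\<close> unfolding e_def gap_def by (simp add: Min_le)
  qed
  fix c :: real
  assume c: "\<bar>c\<bar> \<le> e"
  define w where "w = (\<lambda>i. z i + (if i \<in> C then c else 0) *\<^sub>R v)"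
  have "norm (w i - w j) \<le> dist (x i) (x j)" if ij: "i \<le> n" "j \<le> n" for i j
  proof (cases "i \<in> C \<longleftrightarrow> j \<in> C")
    case True
    then show ?thesis using Lip10D(3)[OF z ij] unfolding w_def by auto
  next
    case False
    define s where "s = (if i \<in> C then c else - c)"
    have s: "w i - w j = (z i - z j) + s *\<^sub>R v" "\<bar>s\<bar> = \<bar>c\<bar>"
      using False unfolding w_def s_def by (auto simp: algebra_simps)
    have "norm (w i - w j) \<le> norm (z i - z j) + \<bar>s\<bar> * norm v"
      unfolding s(1) using norm_triangle_ineq[of "z i - z j" "s *\<^sub>R v"] by simp
    also have "\<dots> \<le> norm (z i - z j) + \<bar>c\<bar>"
      using v s(2) mult_left_le[of "norm v" "\<bar>c\<bar>"] by simp
    also have "\<dots> \<le> dist (x i) (x j)"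
      using False gap_le[of i j] gap_le[of j i] ij c
      by (auto simp: dist_commute norm_minus_commute)
    finally show ?thesis .
  qed
  moreover have "w 0 = 0" "\<And>i. n < i \<Longrightarrow> w i = 0"
    using Lip10D(1,2)[OF z] C unfolding w_def by auto
  ultimately show "w \<in> Lip10 x n"
    unfolding w_def Lip10_def by auto
qed

definition Lip10_slice ::
    "(nat \<Rightarrow> 'a::metric_space) \<Rightarrow> nat \<Rightarrow> (nat \<Rightarrow> 'b::real_normed_vector) \<Rightarrow> 'b \<Rightarrow> (nat \<Rightarrow> real) set" where
  "Lip10_slice x n y v = {t. (\<forall>i>n. t i = 0) \<and> (\<lambda>i. y i + t i *\<^sub>R v) \<in> Lip10 x n}"

lemma zero_in_Lip10_slice: "y \<in> Lip10 x n \<Longrightarrow> (\<lambda>_. 0) \<in> Lip10_slice x n y v"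
  unfolding Lip10_slice_def by simp

lemma Lip10_slice_zero_at_base:
  assumes "y \<in> Lip10 x n" "v \<noteq> 0" "t \<in> Lip10_slice x n y v"
  shows "t 0 = 0"
  using Lip10D(1)[OF assms(1)] assms(2,3) unfolding Lip10_slice_def Lip10_def by auto

lemma tuple_convex_Lip10_slice: "tuple_convex (Lip10_slice x n y v)"
  unfolding tuple_convex_def
proof (intro ballI allI impI)
  fix a b :: "nat \<Rightarrow> real" and u :: real
  assume a: "a \<in> Lip10_slice x n y v" and b: "b \<in> Lip10_slice x n y v" and u: "0 \<le> u" "u \<le> 1"
  have "(\<lambda>i. y i + ((1 - u) *\<^sub>R a i + u *\<^sub>R b i) *\<^sub>R v)
      = (\<lambda>i. (1 - u) *\<^sub>R (y i + a i *\<^sub>R v) + u *\<^sub>R (y i + b i *\<^sub>R v))"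
    by (simp add: algebra_simps)
  also have "\<dots> \<in> Lip10 x n"
    using a b u unfolding Lip10_slice_def
    by (intro tuple_convex_Lip10[unfolded tuple_convex_def, rule_format]) auto
  finally show "(\<lambda>i. (1 - u) *\<^sub>R a i + u *\<^sub>R b i) \<in> Lip10_slice x n y v"
    using a b unfolding Lip10_slice_def by auto
qed

lemma Lip10_slice_coordinate_bound:
  assumes y: "y \<in> Lip10 x n" and v: "norm v = 1" and t: "t \<in> Lip10_slice x n y v"
  shows "\<bar>t i\<bar> \<le> 2 * dist (x i) (x 0)"
proof (cases "i \<le> n")
  case True
  define z where "z = (\<lambda>i. y i + t i *\<^sub>R v)"
  have z: "z \<in> Lip10 x n"
    using t unfolding Lip10_slice_def z_def by blast
  have "\<bar>t i\<bar> = norm (z i - y i)"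
    using v unfolding z_def by simp
  also have "\<dots> \<le> norm (z i) + norm (y i)"
    by (rule norm_triangle_ineq4)
  also have "\<dots> \<le> dist (x i) (x 0) + dist (x i) (x 0)"
    using Lip10D(3)[OF z True le0] Lip10D(1)[OF z] Lip10D(3)[OF y True le0] Lip10D(1)[OF y]
    by (intro add_mono) simp_all
  finally show ?thesis by simp
next
  case False
  then show ?thesis using t unfolding Lip10_slice_def by simp
qed

lemma closed_Lip10_slice: "closed (Lip10_slice x n y v)"
proof -
  have "continuous_on S (\<lambda>t i. y i + t i *\<^sub>R v)" for S
    by (rule continuous_on_coordinatewise_then_product)
      (intro continuous_intros continuous_on_coordinate)
  moreover have "closed {t :: nat \<Rightarrow> real. \<forall>i. n < i \<longrightarrow> t i = 0}"
    by (intro closed_Collect_all closed_Collect_imp closed_Collect_eq closed_Collect_const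
        continuous_on_coordinate continuous_on_const) (simp_all add: Collect_const)
  ultimately have "closed ({t. \<forall>i. n < i \<longrightarrow> t i = 0} \<inter> (\<lambda>t i. y i + t i *\<^sub>R v) -` Lip10 x n)"
    by (rule continuous_closed_preimage[OF _ _ closed_Lip10])
  moreover have "Lip10_slice x n y v = {t. \<forall>i. n < i \<longrightarrow> t i = 0} \<inter> (\<lambda>t i. y i + t i *\<^sub>R v) -` Lip10 x n"
    unfolding Lip10_slice_def by auto
  ultimately show ?thesis by simp
qed

lemma compact_Lip10_slice:
  assumes "y \<in> Lip10 x n" "norm v = 1"
  shows "compact (Lip10_slice x n y v)"
proof -
  let ?K = "PiE UNIV (\<lambda>i. cball (0::real) (2 * dist (x i) (x 0)))"
  have "compact ?K"
    using compactin_PiE[of "\<lambda>_. euclidean" UNIV "\<lambda>i. cball (0::real) (2 * dist (x i) (x 0))"]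
    by (simp add: euclidean_product_topology)
  moreover have "Lip10_slice x n y v = ?K \<inter> Lip10_slice x n y v"
    using Lip10_slice_coordinate_bound[OF assms] by auto
  ultimately show ?thesis
    using compact_Int_closed closed_Lip10_slice by metis
qed

lemma Lip10_slice_extreme_tight_connected:
  fixes y :: "nat \<Rightarrow> 'b::real_normed_vector"
  assumes v: "norm v = 1" and t: "tuple_extreme_point t (Lip10_slice x n y v)" and k: "k \<le> n"
  shows "(0, k) \<in> (tight_pairs x n (\<lambda>i. y i + t i *\<^sub>R v))\<^sup>*"
proof (rule ccontr)
  define z where "z = (\<lambda>i. y i + t i *\<^sub>R v)"
  define E where "E = tight_pairs x n z"
  define C where "C = {i. i \<le> n \<and> (0, i) \<notin> E\<^sup>*}"
  assume "(0, k) \<notin> (tight_pairs x n (\<lambda>i. y i + t i *\<^sub>R v))\<^sup>*"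
  then have "k \<in> C"
    using k unfolding C_def E_def z_def by simp
  have t_slice: "t \<in> Lip10_slice x n y v"
    using t unfolding tuple_extreme_point_def by blast
  then have z: "z \<in> Lip10 x n"
    unfolding Lip10_slice_def z_def by blast
  have C_sub: "C \<subseteq> {1..n}"
  proof
    fix i assume "i \<in> C"
    then have "i \<le> n" "(0, i) \<notin> E\<^sup>*"
      unfolding C_def by auto
    then show "i \<in> {1..n}"
      by (cases i) auto
  qed
  have slack: "norm (z i - z j) < dist (x i) (x j)" if "i \<in> C" "j \<le> n" "j \<notin> C" for i j
  proof -
    have "(0, j) \<in> E\<^sup>*" "(0, i) \<notin> E\<^sup>*" "i \<le> n"
      using that unfolding C_def by auto
    then have "(j, i) \<notin> E"
      by (meson rtrancl.rtrancl_into_rtrancl)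
    then have "norm (z i - z j) \<noteq> dist (x i) (x j)"
      using tight_pairs_sym[of i j x n z] \<open>i \<le> n\<close> \<open>j \<le> n\<close> unfolding E_def tight_pairs_def by auto
    then show ?thesis
      using Lip10D(3)[OF z \<open>i \<le> n\<close> \<open>j \<le> n\<close>] by simp
  qed
  obtain e where "e > 0"
    and perturb: "\<And>c. \<bar>c\<bar> \<le> e \<Longrightarrow> (\<lambda>i. z i + (if i \<in> C then c else 0) *\<^sub>R v) \<in> Lip10 x n"
    by (rule Lip10_perturb_slack_block[OF z _ C_sub slack]) (auto simp: v)
  define s where "s = (\<lambda>c i. t i + (if i \<in> C then c else 0))"
  have "s c \<in> Lip10_slice x n y v" if "\<bar>c\<bar> \<le> e" for c
  proof -
    have "(\<lambda>i. y i + s c i *\<^sub>R v) = (\<lambda>i. z i + (if i \<in> C then c else 0) *\<^sub>R v)"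
      unfolding s_def z_def by (simp add: algebra_simps)
    then show ?thesis
      using perturb[OF that] t_slice C_sub unfolding Lip10_slice_def s_def by auto
  qed
  then have "s e \<in> Lip10_slice x n y v" "s (- e) \<in> Lip10_slice x n y v"
    using \<open>e > 0\<close> by simp_all
  moreover have "t = (\<lambda>i. (1 - 1/2) *\<^sub>R s e i + (1/2 :: real) *\<^sub>R s (- e) i)"
    unfolding s_def by (simp add: fun_eq_iff field_simps)
  ultimately have "s e = s (- e)"
    using tuple_extreme_pointD[OF t, of "s e" "s (- e)" "1/2"] by simp
  then have "s e k = s (- e) k"
    by simp
  then show False
    using \<open>k \<in> C\<close> \<open>e > 0\<close> unfolding s_def by simp
qed

theorem mainTheorem4:
  fixes x :: "nat \<Rightarrow> 'a::metric_space" and n :: nat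
    and y :: "nat \<Rightarrow> 'b::banach" and v :: 'b
    and D :: "(nat \<Rightarrow> real) set"
  assumes "n \<ge> 1"
    and "inj_on x {0..n}"
    and "\<exists>z::'b. z \<noteq> 0"
    and "strictly_convex_space TYPE('b)"
    and "y \<in> Lip10 x n"
    and "norm v = 1"
    and "D = {t. (\<forall>i>n. t i = 0) \<and> (\<lambda>i. y i + t i *\<^sub>R v) \<in> Lip10 x n}"
  shows "D \<noteq> {} \<and> tuple_convex D \<and> compact D \<and> D \<subseteq> {t. t 0 = 0}
     \<and> (\<forall>t. tuple_extreme_point t D \<longrightarrow>
            tuple_extreme_point (\<lambda>i. y i + t i *\<^sub>R v) (Lip10 x n))"
proof -
  note sc = assms(4) and y = assms(5) and v = assms(6)
  have D: "D = Lip10_slice x n y v"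
    unfolding assms(7) Lip10_slice_def ..
  have "tuple_extreme_point (\<lambda>i. y i + t i *\<^sub>R v) (Lip10 x n)" if t: "tuple_extreme_point t D" for t
  proof (rule Lip10_extreme_if_tight_connected[OF sc])
    show "(\<lambda>i. y i + t i *\<^sub>R v) \<in> Lip10 x n"
      using t unfolding D tuple_extreme_point_def Lip10_slice_def by blast
    show "(0, k) \<in> (tight_pairs x n (\<lambda>i. y i + t i *\<^sub>R v))\<^sup>*" if "k \<le> n" for k
      using Lip10_slice_extreme_tight_connected[OF v] t that unfolding D by blast
  qed
  moreover have "v \<noteq> 0"
    using v by auto
  then have "D \<subseteq> {t. t 0 = 0}"
    using Lip10_slice_zero_at_base[OF y] unfolding D by blast
  ultimately show ?thesis
    using zero_in_Lip10_slice[OF y] tuple_convex_Lip10_slice compact_Lip10_slice[OF y v]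
    unfolding D by blast
qed

end
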